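(* Let $G$ be a group equipped with a proper left-invariant metric $d_G$ (bounded sets are finite). Suppose $G$ is locally finite. Then the following are equivalent: (a) $\mathrm{dim}_{AN}(G,d_G)=0$; (b) there is a constant $c>0$ such that for each $r>0$ the subgroup of $G$ generated by the open ball $B(1,r)$ is contained in $B(1,c\cdot r)$.
   Context: A group is locally finite if every finitely generated subgroup is finite. For a metric space $X$, $r>0$: an $r$-path is a sequence $x_0,\dots,x_m$ with $d(x_j,x_{j+1})<r$; two points of $Y\subseteq X$ lie in the same $r$-component of $Y$ if joined by an $r$-path in $Y$. An $n$-dimensional control function of $X$ is $D:\mathbb{R}_+\to\mathbb{R}_+\cup\{\infty\}$ such that for each $r>0$ there is a cover $\{X_0,\dots,X_n\}$ of $X$ such that every open ball $B(x,r)$ lies in some $X_i$ and every $r$-component of each $X_i$ has diameter at most $D(r)$. $\mathrm{dim}_{AN}(X)$ is the smallest $n$ such that $X$ has an $n$-dimensional control function of the form $D(r)=Cr$ for some $C>0$. *)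

theory Defs
  imports "HOL-Algebra.Algebra" "HOL-Library.Extended_Real" "HOL-Library.Extended_Nat"
begin

definition metric_on :: "'a set \<Rightarrow> ('a \<Rightarrow> 'a \<Rightarrow> real) \<Rightarrow> bool" where
  "metric_on M d \<longleftrightarrow>
     (\<forall>x\<in>M. \<forall>y\<in>M. d x y \<ge> 0 \<and> (d x y = 0 \<longleftrightarrow> x = y) \<and> d x y = d y x) \<and>
     (\<forall>x\<in>M. \<forall>y\<in>M. \<forall>z\<in>M. d x z \<le> d x y + d y z)"

definition mball :: "'a set \<Rightarrow> ('a \<Rightarrow> 'a \<Rightarrow> real) \<Rightarrow> 'a \<Rightarrow> real \<Rightarrow> 'a set" where
  "mball M d x r = {y\<in>M. d x y < r}"

definition same_r_component ::
  "('a \<Rightarrow> 'a \<Rightarrow> real) \<Rightarrow> real \<Rightarrow> 'a set \<Rightarrow> 'a \<Rightarrow> 'a \<Rightarrow> bool" where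
  "same_r_component d r Y x y \<longleftrightarrow>
     (\<exists>ps. ps \<noteq> [] \<and> hd ps = x \<and> last ps = y \<and> set ps \<subseteq> Y \<and>
           (\<forall>j. Suc j < length ps \<longrightarrow> d (ps ! j) (ps ! Suc j) < r))"

text \<open>n-dimensional control function D of (M,d). The diameter bound
  "every r-component of U i has diameter at most D r" is written out:
  any two points of one r-component have distance at most D r.\<close>
definition control_function ::
  "'a set \<Rightarrow> ('a \<Rightarrow> 'a \<Rightarrow> real) \<Rightarrow> nat \<Rightarrow> (real \<Rightarrow> ereal) \<Rightarrow> bool" where
  "control_function M d n D \<longleftrightarrow>
     (\<forall>r>0. \<exists>U :: nat \<Rightarrow> 'a set.
        (\<forall>i\<le>n. U i \<subseteq> M) \<and> (\<Union>i\<le>n. U i) = M \<and>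
        (\<forall>x\<in>M. \<exists>i\<le>n. mball M d x r \<subseteq> U i) \<and>
        (\<forall>i\<le>n. \<forall>x y. same_r_component d r (U i) x y \<longrightarrow> ereal (d x y) \<le> D r))"

definition dim_AN :: "'a set \<Rightarrow> ('a \<Rightarrow> 'a \<Rightarrow> real) \<Rightarrow> enat" where
  "dim_AN M d =
     (if \<exists>n C. C > 0 \<and> control_function M d n (\<lambda>r. ereal (C * r))
      then enat (LEAST n. \<exists>C. C > 0 \<and> control_function M d n (\<lambda>r. ereal (C * r)))
      else \<infinity>)"

definition locally_finite_group :: "('a, 'b) monoid_scheme \<Rightarrow> bool" where
  "locally_finite_group G \<longleftrightarrow>
     (\<forall>S. S \<subseteq> carrier G \<longrightarrow> finite S \<longrightarrow> finite (generate G S))"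

definition left_invariant :: "('a, 'b) monoid_scheme \<Rightarrow> ('a \<Rightarrow> 'a \<Rightarrow> real) \<Rightarrow> bool" where
  "left_invariant G d \<longleftrightarrow>
     (\<forall>g\<in>carrier G. \<forall>x\<in>carrier G. \<forall>y\<in>carrier G. d (g \<otimes>\<^bsub>G\<^esub> x) (g \<otimes>\<^bsub>G\<^esub> y) = d x y)"

definition proper_metric :: "'a set \<Rightarrow> ('a \<Rightarrow> 'a \<Rightarrow> real) \<Rightarrow> bool" where
  "proper_metric M d \<longleftrightarrow>
     (\<forall>S. S \<subseteq> M \<longrightarrow> (\<exists>x\<in>M. \<exists>R. \<forall>y\<in>S. d x y \<le> R) \<longrightarrow> finite S)"

end

(*
  For a left-invariant metric, an r-path x = x_0, ..., x_m = y is the same as a factorisation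
  of x^-1 y into the increments x_j^-1 x_(j+1), which lie in the ball B(1,r). So the r-component
  of x is the coset x<B(1,r)>, and all r-components are translates of the subgroup <B(1,r)>.
  Dimension 0 with linear control means that r-components have diameter O(r), which is thus
  the condition d(1,h) = O(r) for h in <B(1,r)>.
*)
theory Submission
  imports Defs
begin

definition r_adjacent :: "('a \<Rightarrow> 'a \<Rightarrow> real) \<Rightarrow> real \<Rightarrow> 'a set \<Rightarrow> ('a \<times> 'a) set" where
  "r_adjacent d r Y = {(a, b). a \<in> Y \<and> b \<in> Y \<and> d a b < r}"

lemma same_r_component_iff_rtrancl:
  "same_r_component d r Y x y \<longleftrightarrow> x \<in> Y \<and> (x, y) \<in> (r_adjacent d r Y)\<^sup>*"
proof
  assume "same_r_component d r Y x y"
  then obtain ps where ps: "ps \<noteq> []" "hd ps = x" "last ps = y" "set ps \<subseteq> Y"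
    "\<forall>j. Suc j < length ps \<longrightarrow> d (ps ! j) (ps ! Suc j) < r"
    unfolding same_r_component_def by blast
  have "(x, y) \<in> r_adjacent d r Y ^^ (length ps - 1)"
    unfolding relpow_fun_conv
    using ps by (intro exI[of _ "(!) ps"]) (auto simp: hd_conv_nth last_conv_nth r_adjacent_def)
  moreover have "x \<in> Y"
    using ps by auto
  ultimately show "x \<in> Y \<and> (x, y) \<in> (r_adjacent d r Y)\<^sup>*"
    by (auto simp: rtrancl_power)
next
  assume "x \<in> Y \<and> (x, y) \<in> (r_adjacent d r Y)\<^sup>*"
  then obtain n f where f: "f 0 = x" "f n = y" "\<forall>i<n. (f i, f (Suc i)) \<in> r_adjacent d r Y"
    and "x \<in> Y"
    by (auto simp: rtrancl_power relpow_fun_conv)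
  have "f i \<in> Y" if "i \<le> n" for i
    using that f \<open>x \<in> Y\<close> by (cases i) (auto simp: r_adjacent_def)
  then show "same_r_component d r Y x y"
    unfolding same_r_component_def using f
    by (intro exI[of _ "map f [0..<Suc n]"])
      (auto simp: hd_map last_map r_adjacent_def simp del: upt_Suc)
qed

lemma dim_AN_eq_0_iff:
  "dim_AN M d = 0 \<longleftrightarrow>
     (\<exists>C>0. \<forall>r>0. \<forall>x y. same_r_component d r M x y \<longrightarrow> d x y \<le> C * r)"
proof -
  have control_0_iff: "control_function M d 0 (\<lambda>r. ereal (C * r)) \<longleftrightarrow>
      (\<forall>r>0. \<forall>x y. same_r_component d r M x y \<longrightarrow> d x y \<le> C * r)" for C
    unfolding control_function_def
    by (auto simp: mball_def intro!: exI[of _ "\<lambda>_. M"])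
  define linear_control where
    "linear_control n \<longleftrightarrow> (\<exists>C>0. control_function M d n (\<lambda>r. ereal (C * r)))" for n
  have "dim_AN M d = 0 \<longleftrightarrow> linear_control 0"
  proof
    assume "dim_AN M d = 0"
    then have "\<exists>n. linear_control n" and "(LEAST n. linear_control n) = 0"
      by (auto simp: dim_AN_def linear_control_def zero_enat_def split: if_splits)
    then show "linear_control 0"
      by (metis LeastI_ex)
  qed (auto simp: dim_AN_def linear_control_def zero_enat_def intro: Least_eq_0)
  with control_0_iff show ?thesis
    by (simp add: linear_control_def)
qed

lemma linear_bound_le_iff_less:
  fixes f :: "'a \<Rightarrow> real"
  shows "(\<exists>C>0. \<forall>r>0. \<forall>x\<in>A r. f x \<le> C * r) \<longleftrightarrow> (\<exists>c>0. \<forall>r>0. \<forall>x\<in>A r. f x < c * r)"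
proof
  assume "\<exists>C>0. \<forall>r>0. \<forall>x\<in>A r. f x \<le> C * r"
  then obtain C where "C > 0" and "\<forall>r>0. \<forall>x\<in>A r. f x \<le> C * r"
    by blast
  then have "\<forall>r>0. \<forall>x\<in>A r. f x < (2 * C) * r"
    by (smt (verit) mult_strict_right_mono)
  with \<open>C > 0\<close> show "\<exists>c>0. \<forall>r>0. \<forall>x\<in>A r. f x < c * r"
    by (intro exI[of _ "2 * C"]) simp
qed (auto intro: less_imp_le)

locale left_invariant_metric_group = group G for G (structure) +
  fixes d :: "'a \<Rightarrow> 'a \<Rightarrow> real"
  assumes metric: "metric_on (carrier G) d"
    and invariant: "left_invariant G d"
begin

lemma dist_translate:
  "\<lbrakk>g \<in> carrier G; x \<in> carrier G; y \<in> carrier G\<rbrakk> \<Longrightarrow> d (g \<otimes> x) (g \<otimes> y) = d x y"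
  using invariant unfolding left_invariant_def by blast

lemma dist_one_inv_mult:
  "\<lbrakk>x \<in> carrier G; y \<in> carrier G\<rbrakk> \<Longrightarrow> d \<one> (inv x \<otimes> y) = d x y"
  using dist_translate[of "inv x" x y] by simp

lemma dist_one_inv:
  "x \<in> carrier G \<Longrightarrow> d \<one> (inv x) = d \<one> x"
  using dist_one_inv_mult[of x \<one>] metric by (simp add: metric_on_def)

abbreviation ball_one :: "real \<Rightarrow> 'a set" where
  "ball_one r \<equiv> mball (carrier G) d \<one> r"

lemma ball_one_subset_carrier: "ball_one r \<subseteq> carrier G"
  by (auto simp: mball_def)

lemma r_adjacent_rtrancl_translate:
  assumes "(x, y) \<in> (r_adjacent d r (carrier G))\<^sup>*" and "g \<in> carrier G"
  shows "(g \<otimes> x, g \<otimes> y) \<in> (r_adjacent d r (carrier G))\<^sup>*"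
  using assms(1)
proof (induction rule: rtrancl_induct)
  case (step y z)
  then have "(g \<otimes> y, g \<otimes> z) \<in> r_adjacent d r (carrier G)"
    using assms(2) dist_translate by (auto simp: r_adjacent_def)
  with step.IH show ?case
    by (rule rtrancl_into_rtrancl)
qed simp

lemma same_r_component_iff_generate:
  "same_r_component d r (carrier G) x y \<longleftrightarrow>
     x \<in> carrier G \<and> y \<in> carrier G \<and> inv x \<otimes> y \<in> generate G (ball_one r)"
  unfolding same_r_component_iff_rtrancl
proof safe
  assume x: "x \<in> carrier G" and xy: "(x, y) \<in> (r_adjacent d r (carrier G))\<^sup>*"
  from xy have "y \<in> carrier G \<and> inv x \<otimes> y \<in> generate G (ball_one r)"
  proof (induction rule: rtrancl_induct)
    case base
    show ?case
      using x by (simp add: generate.one)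
  next
    case (step y z)
    then have y: "y \<in> carrier G" and z: "z \<in> carrier G" and "d y z < r"
      by (auto simp: r_adjacent_def)
    then have "inv y \<otimes> z \<in> generate G (ball_one r)"
      by (intro generate.incl) (simp add: mball_def dist_one_inv_mult)
    moreover have "inv x \<otimes> z = (inv x \<otimes> y) \<otimes> (inv y \<otimes> z)"
      using x y z by (simp add: m_assoc flip: m_assoc[of y "inv y" z])
    ultimately show ?case
      using step.IH z by (metis generate.eng)
  qed
  then show "y \<in> carrier G" and "inv x \<otimes> y \<in> generate G (ball_one r)"
    by auto
next
  assume x: "x \<in> carrier G" and y: "y \<in> carrier G"
    and "inv x \<otimes> y \<in> generate G (ball_one r)"
  have "(\<one>, h) \<in> (r_adjacent d r (carrier G))\<^sup>*" if "h \<in> generate G (ball_one r)" for h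
    using that
  proof (induction rule: generate.induct)
    case (incl h)
    then show ?case
      by (auto simp: mball_def r_adjacent_def)
  next
    case (inv h)
    then show ?case
      by (auto simp: mball_def r_adjacent_def dist_one_inv)
  next
    case (eng h1 h2)
    then have "h1 \<in> carrier G"
      using generate_in_carrier ball_one_subset_carrier by blast
    with eng.IH(2) have "(h1 \<otimes> \<one>, h1 \<otimes> h2) \<in> (r_adjacent d r (carrier G))\<^sup>*"
      by (rule r_adjacent_rtrancl_translate)
    with eng.IH(1) \<open>h1 \<in> carrier G\<close> show ?case
      by simp
  qed simp
  from r_adjacent_rtrancl_translate[OF this[OF \<open>inv x \<otimes> y \<in> _\<close>] x]
  show "(x, y) \<in> (r_adjacent d r (carrier G))\<^sup>*"
    using x y by (simp flip: m_assoc)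
qed

lemma r_component_dist_bound_iff:
  "(\<forall>x y. same_r_component d r (carrier G) x y \<longrightarrow> d x y \<le> R) \<longleftrightarrow>
     (\<forall>h\<in>generate G (ball_one r). d \<one> h \<le> R)"
proof safe
  fix h
  assume "\<forall>x y. same_r_component d r (carrier G) x y \<longrightarrow> d x y \<le> R"
    and h: "h \<in> generate G (ball_one r)"
  moreover have "same_r_component d r (carrier G) \<one> h"
    using h generate_in_carrier[OF ball_one_subset_carrier h]
    by (simp add: same_r_component_iff_generate)
  ultimately show "d \<one> h \<le> R"
    by blast
next
  fix x y
  assume "\<forall>h\<in>generate G (ball_one r). d \<one> h \<le> R"
    and "same_r_component d r (carrier G) x y"
  then show "d x y \<le> R"
    unfolding same_r_component_iff_generate by (metis dist_one_inv_mult)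
qed

lemma generate_subset_ball_one_iff:
  "generate G (ball_one r) \<subseteq> ball_one R \<longleftrightarrow> (\<forall>h\<in>generate G (ball_one r). d \<one> h < R)"
  using generate_incl[OF ball_one_subset_carrier] by (auto simp: mball_def)

end

theorem proposition2p1:
  fixes G :: "('a, 'b) monoid_scheme" and d :: "'a \<Rightarrow> 'a \<Rightarrow> real"
  assumes "group G"
    and "metric_on (carrier G) d"
    and "left_invariant G d"
    and "proper_metric (carrier G) d"
    and "locally_finite_group G"
  shows "dim_AN (carrier G) d = 0 \<longleftrightarrow>
         (\<exists>c>0. \<forall>r>0. generate G (mball (carrier G) d \<one>\<^bsub>G\<^esub> r)
                        \<subseteq> mball (carrier G) d \<one>\<^bsub>G\<^esub> (c * r))"
proof -
  interpret left_invariant_metric_group G d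
    using assms(1-3)
    by (intro left_invariant_metric_group.intro left_invariant_metric_group_axioms.intro)
  have "dim_AN (carrier G) d = 0 \<longleftrightarrow>
      (\<exists>C>0. \<forall>r>0. \<forall>h\<in>generate G (ball_one r). d \<one>\<^bsub>G\<^esub> h \<le> C * r)"
    by (simp add: dim_AN_eq_0_iff r_component_dist_bound_iff)
  also have "\<dots> \<longleftrightarrow> (\<exists>c>0. \<forall>r>0. \<forall>h\<in>generate G (ball_one r). d \<one>\<^bsub>G\<^esub> h < c * r)"
    by (rule linear_bound_le_iff_less)
  finally show ?thesis
    by (simp add: generate_subset_ball_one_iff)
qed

end
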